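(* For $n\in\{0,1,2,\dots\}$ let \[ b_n=\frac14\frac{(-1)^n}{n!}\sum_{k=0}^{n}(-1)^kS(n,k)(2k-1)!!,\qquad d_n=\frac{(-1)^n}{n!}\sum_{k=0}^{n}(-1)^kS(n,k)(2k-3)!!, \] so that $d_0=-1$, $d_1=1$, $d_2=0$, $d_3=\frac16$, $b_0=b_1=b_2=\frac14$, and $b_3=\frac7{24}$. For $n\in\mathbb{N}$ let $D^{(n)}=(D_{ij})_{1\le i,j\le n}$ be the $n\times n$ matrix with $D_{ij}=d_{i-j+1}$ if $j\le i$, $D_{i,i+1}=-1$, and $D_{ij}=0$ if $j\ge i+2$. Let $B^{(n)}=(B_{ij})_{1\le i,j\le n}$ be the $n\times n$ matrix with $B_{ij}=b_{i-j+1}$ if $j\le i+1$ and $B_{ij}=0$ if $j\ge i+2$. Then for every $n\in\mathbb{N}$, \[ b_n=\frac14\det D^{(n)}\qquad\text{and}\qquad d_n=(-1)^{n-1}4^n\det B^{(n)}. \]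
   Context: $S(n,k)$ are the Stirling numbers of the second kind, given by $\frac{(e^x-1)^k}{k!}=\sum_{n\ge k}S(n,k)\frac{x^n}{n!}$. Double factorials: $(2j-1)!!=1\cdot3\cdots(2j-1)$ for $j\ge1$, and $[-(2j+1)]!!=(-1)^j/(2j-1)!!$ for $j\ge0$, so $(-1)!!=1$ and $(-3)!!=-1$. *)

theory Defs
  imports Complex_Main "HOL-Combinatorics.Stirling" "Jordan_Normal_Form.Determinant"
begin

text \<open>odd_dfact k = (2k-1)!! for integer k, with the convention
  [-(2j+1)]!! = (-1)^j / (2j-1)!! for j >= 0 (so (-1)!! = 1, (-3)!! = -1).\<close>
definition odd_dfact :: "int \<Rightarrow> real" where
  "odd_dfact k =
     (if k \<ge> 0 then (\<Prod>i=1..nat k. 2 * real i - 1)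
      else (-1) ^ nat (-k) / (\<Prod>i=1..nat (-k). 2 * real i - 1))"

definition b_seq :: "nat \<Rightarrow> real" where
  "b_seq n = 1/4 * ((-1) ^ n / fact n) *
     (\<Sum>k=0..n. (-1) ^ k * real (Stirling n k) * odd_dfact (int k))"

definition d_seq :: "nat \<Rightarrow> real" where
  "d_seq n = ((-1) ^ n / fact n) *
     (\<Sum>k=0..n. (-1) ^ k * real (Stirling n k) * odd_dfact (int k - 1))"

text \<open>Matrices with 0-based indices i, j < n; entry (i,j) corresponds to the
  paper's entry (i+1, j+1).\<close>
definition D_mat :: "nat \<Rightarrow> real mat" where
  "D_mat n = mat n n (\<lambda>(i, j). if j \<le> i then d_seq (i - j + 1)
                               else if j = i + 1 then -1 else 0)"

definition B_mat :: "nat \<Rightarrow> real mat" where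
  "B_mat n = mat n n (\<lambda>(i, j). if j \<le> i + 1 then b_seq (i + 1 - j) else 0)"

end

theory Submission
  imports Defs "HOL-Computational_Algebra.Formal_Power_Series"
begin

text \<open>Stirling numbers are the coefficients of the powers of \<open>e^x - 1\<close>, so the
  generating functions of \<open>4 b_n\<close> and \<open>d_n\<close> are \<open>F(e^(-x) - 1)\<close> and \<open>G(e^(-x) - 1)\<close>
  with \<open>F = (1 + 2x)^(-1/2)\<close> and \<open>G = -(1 + 2x)^(1/2)\<close>; hence their product is \<open>-1\<close>.
  Expanding along the first row shows that the lower Hessenberg Toeplitz determinant built
  from the coefficients of a power series \<open>f\<close> is, up to a power of \<open>f_0\<close>, a coefficient of
  \<open>1/f\<close>, and both \<open>D\<close> and \<open>B\<close> are matrices of this kind.\<close>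

text \<open>The Toeplitz matrix \<open>(a (i + 1 - j))\<close> with its first column replaced by \<open>v\<close>; the
  free first column is what makes the first-row expansion close up.\<close>
definition hessenberg_mat :: "nat \<Rightarrow> (nat \<Rightarrow> 'a::zero) \<Rightarrow> (nat \<Rightarrow> 'a) \<Rightarrow> 'a mat" where
  "hessenberg_mat n a v =
     mat n n (\<lambda>(i, j). if j = 0 then v i else if j \<le> i + 1 then a (i + 1 - j) else 0)"

lemma hessenberg_mat_carrier: "hessenberg_mat n a v \<in> carrier_mat n n"
  by (simp add: hessenberg_mat_def)

lemma mat_delete_hessenberg_mat_0_0:
  "mat_delete (hessenberg_mat (Suc n) a v) 0 0 = hessenberg_mat n a (\<lambda>i. a (Suc i))"
  unfolding hessenberg_mat_def mat_delete_def by (rule eq_matI) auto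

lemma mat_delete_hessenberg_mat_0_1:
  "mat_delete (hessenberg_mat (Suc n) a v) 0 1 = hessenberg_mat n a (\<lambda>i. v (Suc i))"
  unfolding hessenberg_mat_def mat_delete_def by (rule eq_matI) auto

lemma det_hessenberg_mat_0: "det (hessenberg_mat 0 a v) = 1"
  by (subst det_def') (auto simp: hessenberg_mat_def)

lemma det_hessenberg_mat_1: "det (hessenberg_mat (Suc 0) a v) = (v 0 :: 'a::comm_ring_1)"
  by (subst det_def') (auto simp: hessenberg_mat_def)

lemma det_hessenberg_mat_Suc_Suc:
  fixes a v :: "nat \<Rightarrow> 'a::comm_ring_1"
  shows "det (hessenberg_mat (Suc (Suc n)) a v) =
    v 0 * det (hessenberg_mat (Suc n) a (\<lambda>i. a (Suc i)))
    - a 0 * det (hessenberg_mat (Suc n) a (\<lambda>i. v (Suc i)))"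
proof -
  let ?H = "hessenberg_mat (Suc (Suc n)) a v"
  have "det ?H = (\<Sum>j<Suc (Suc n). ?H $$ (0, j) * cofactor ?H 0 j)"
    by (rule laplace_expansion_row[OF hessenberg_mat_carrier]) simp
  also have "\<dots> = (\<Sum>j<2. ?H $$ (0, j) * cofactor ?H 0 j)"
    by (rule sum.mono_neutral_right) (auto simp: hessenberg_mat_def)
  also have "\<dots> = ?H $$ (0, 0) * cofactor ?H 0 0 + ?H $$ (0, 1) * cofactor ?H 0 1"
    by (simp add: numeral_2_eq_2)
  also have "\<dots> = v 0 * det (hessenberg_mat (Suc n) a (\<lambda>i. a (Suc i)))
      - a 0 * det (hessenberg_mat (Suc n) a (\<lambda>i. v (Suc i)))"
    unfolding cofactor_def mat_delete_hessenberg_mat_0_0 mat_delete_hessenberg_mat_0_1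
    by (simp add: hessenberg_mat_def)
  finally show ?thesis .
qed

lemma det_hessenberg_mat_Suc:
  fixes a v :: "nat \<Rightarrow> 'a::comm_ring_1"
  shows "det (hessenberg_mat (Suc n) a v) =
    (\<Sum>k\<le>n. (- a 0) ^ k * v k * det (hessenberg_mat (n - k) a (\<lambda>i. a (Suc i))))"
proof (induction n arbitrary: v)
  case 0
  show ?case by (simp add: det_hessenberg_mat_0 det_hessenberg_mat_1)
next
  case (Suc n)
  have "det (hessenberg_mat (Suc (Suc n)) a v) =
      v 0 * det (hessenberg_mat (Suc n) a (\<lambda>i. a (Suc i))) - a 0 *
      (\<Sum>k\<le>n. (- a 0) ^ k * v (Suc k) * det (hessenberg_mat (n - k) a (\<lambda>i. a (Suc i))))"
    by (simp only: det_hessenberg_mat_Suc_Suc Suc.IH)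
  then show ?case
    unfolding sum.atMost_Suc_shift by (simp add: sum_distrib_left sum_negf algebra_simps)
qed

lemma det_toeplitz_hessenberg_mat:
  fixes a e :: "nat \<Rightarrow> 'a::comm_ring_1"
  assumes "Abs_fps a * Abs_fps e = 1"
  shows "det (hessenberg_mat n a (\<lambda>i. a (Suc i))) = (- a 0) ^ n * a 0 * e n"
proof (induction n rule: less_induct)
  case (less n)
  have coeff: "(\<Sum>k\<le>m. a k * e (m - k)) = (if m = 0 then 1 else 0)" for m
    using arg_cong[OF assms, of "\<lambda>h. fps_nth h m"] by (simp add: fps_mult_nth atLeast0AtMost)
  show ?case
  proof (cases n)
    case 0
    then show ?thesis
      using coeff[of 0] by (simp add: det_hessenberg_mat_0)
  next
    case (Suc m)
    have rec: "(\<Sum>k\<le>m. a (Suc k) * e (m - k)) = - a 0 * e (Suc m)"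
      using coeff[of "Suc m"] unfolding sum.atMost_Suc_shift by (simp add: add_eq_0_iff)
    have "det (hessenberg_mat n a (\<lambda>i. a (Suc i))) =
        (\<Sum>k\<le>m. (- a 0) ^ k * a (Suc k) * ((- a 0) ^ (m - k) * a 0 * e (m - k)))"
      unfolding Suc det_hessenberg_mat_Suc using Suc by (intro sum.cong) (simp_all add: less.IH)
    also have "\<dots> = (- a 0) ^ m * a 0 * (\<Sum>k\<le>m. a (Suc k) * e (m - k))"
      unfolding sum_distrib_left
      by (intro sum.cong) (simp_all add: algebra_simps power_add[symmetric])
    finally show ?thesis
      unfolding rec Suc by (simp add: algebra_simps)
  qed
qed

lemma fps_deriv_exp_minus_one_power:
  fixes c :: "'a::field_char_0"
  shows "fps_deriv ((fps_exp c - 1) ^ Suc k) =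
    fps_const (c * of_nat (Suc k)) * ((fps_exp c - 1) ^ Suc k + (fps_exp c - 1) ^ k)"
proof -
  let ?E = "fps_exp c - 1"
  have "fps_deriv ?E = fps_const c * (?E + 1)"
    by simp
  then have "fps_deriv (?E ^ Suc k) = fps_const (of_nat (Suc k)) * (fps_const c * (?E + 1)) * ?E ^ k"
    by (simp only: fps_deriv_power' diff_Suc_1 fps_of_nat)
  also have "\<dots> = fps_const (c * of_nat (Suc k)) * (?E ^ Suc k + ?E ^ k)"
    by (simp only: fps_const_mult[symmetric] power_Suc distrib_left distrib_right mult_ac mult_1)
  finally show ?thesis .
qed

lemma fps_nth_exp_minus_one_power:
  fixes c :: "'a::field_char_0"
  shows "fps_nth ((fps_exp c - 1) ^ k) n = c ^ n * fact k * of_nat (Stirling n k) / fact n"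
proof (induction n arbitrary: k)
  case 0
  then show ?case by (cases k) (auto simp: fps_nth_power_0)
next
  case (Suc n)
  show ?case
  proof (cases k)
    case 0
    then show ?thesis by simp
  next
    case (Suc j)
    let ?E = "fps_exp c - 1"
    have "of_nat (Suc n) * fps_nth (?E ^ Suc j) (Suc n) =
        c * of_nat (Suc j) * (fps_nth (?E ^ Suc j) n + fps_nth (?E ^ j) n)"
      using arg_cong[OF fps_deriv_exp_minus_one_power[of c j], of "\<lambda>f. fps_nth f n"]
      by (simp only: fps_deriv_nth fps_mult_left_const_nth fps_add_nth Suc_eq_plus1)
    also have "\<dots> = c ^ Suc n * fact (Suc j) *
        (of_nat (Suc j) * of_nat (Stirling n (Suc j)) + of_nat (Stirling n j)) / fact n"
      unfolding Suc.IH by (simp add: field_simps)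
    also have "\<dots> = c ^ Suc n * fact (Suc j) * of_nat (Stirling (Suc n) (Suc j)) / fact n"
      by (simp add: algebra_simps)
    also have "\<dots> = of_nat (Suc n) *
        (c ^ Suc n * fact (Suc j) * of_nat (Stirling (Suc n) (Suc j)) / fact (Suc n))"
      by (simp only: fact_Suc of_nat_fact) (simp del: of_nat_Suc)
    finally show ?thesis
      unfolding Suc by (simp only: mult_cancel_left of_nat_eq_0_iff nat.distinct simp_thms)
  qed
qed

lemma fps_compose_exp_minus_one_nth:
  fixes a :: "nat \<Rightarrow> 'a::field_char_0"
  shows "fps_nth (Abs_fps (\<lambda>k. a k / fact k) oo (fps_exp c - 1)) n =
    c ^ n / fact n * (\<Sum>k=0..n. of_nat (Stirling n k) * a k)"
  unfolding fps_compose_nth fps_nth_exp_minus_one_power sum_distrib_left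
  by (intro sum.cong) simp_all

lemma fps_deriv_mult_one_plus_2X:
  fixes f :: "'a::comm_ring_1 fps"
  assumes "\<And>k. of_nat (Suc k) * fps_nth f (Suc k) = - (2 * of_nat k + c) * fps_nth f k"
  shows "fps_deriv f * (1 + fps_const 2 * fps_X) = fps_const (- c) * f"
proof (rule fps_ext)
  fix n
  show "fps_nth (fps_deriv f * (1 + fps_const 2 * fps_X)) n = fps_nth (fps_const (- c) * f) n"
    using assms[of n] assms[of "n - 1"]
    by (cases n) (simp_all add: algebra_simps)
qed

lemma fps_mult_eq_const_if_deriv_mult:
  fixes f g p :: "'a::{idom, semiring_char_0} fps"
  assumes "fps_deriv f * p = fps_const c * f" "fps_deriv g * p = fps_const (- c) * g" "p \<noteq> 0"
  shows "f * g = fps_const (fps_nth f 0 * fps_nth g 0)"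
proof -
  have "fps_deriv (f * g) * p = (fps_deriv f * p) * g + f * (fps_deriv g * p)"
    by (simp add: algebra_simps)
  also have "\<dots> = 0"
    unfolding assms(1,2) by (simp add: algebra_simps flip: fps_const_neg)
  finally have "fps_deriv (f * g) = 0"
    using assms(3) by simp
  then show ?thesis
    by (simp only: fps_deriv_eq_0_iff fps_mult_nth_0)
qed

lemma odd_dfact_Suc: "odd_dfact (int (Suc k)) = (2 * real k + 1) * odd_dfact (int k)"
  unfolding odd_dfact_def by (simp only: nat_int) (simp add: prod.cl_ivl_Suc algebra_simps)

lemma odd_dfact_eq_pred: "odd_dfact (int k) = (2 * real k - 1) * odd_dfact (int k - 1)"
proof (cases k)
  case 0
  then show ?thesis by (simp add: odd_dfact_def)
next
  case (Suc m)
  then show ?thesis using odd_dfact_Suc[of m] by simp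
qed

text \<open>\<open>F\<close> and \<open>G\<close> above; only the differential equations they satisfy are used.\<close>

definition inv_sqrt_fps :: "real fps" where
  "inv_sqrt_fps = Abs_fps (\<lambda>k. (-1) ^ k * odd_dfact (int k) / fact k)"

definition neg_sqrt_fps :: "real fps" where
  "neg_sqrt_fps = Abs_fps (\<lambda>k. (-1) ^ k * odd_dfact (int k - 1) / fact k)"

lemma inv_sqrt_fps_mult_neg_sqrt_fps: "inv_sqrt_fps * neg_sqrt_fps = -1"
proof -
  have inv_sqrt: "fps_deriv inv_sqrt_fps * (1 + fps_const 2 * fps_X) = fps_const (- 1) * inv_sqrt_fps"
    by (rule fps_deriv_mult_one_plus_2X)
       (simp add: inv_sqrt_fps_def odd_dfact_Suc field_simps del: of_nat_Suc)
  have neg_sqrt: "fps_deriv neg_sqrt_fps * (1 + fps_const 2 * fps_X) = fps_const (- (- 1)) * neg_sqrt_fps"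
  proof (rule fps_deriv_mult_one_plus_2X)
    fix k
    have shift: "odd_dfact (int (Suc k) - 1) = odd_dfact (int k)"
      by simp
    show "real (Suc k) * fps_nth neg_sqrt_fps (Suc k) = - (2 * real k + - 1) * fps_nth neg_sqrt_fps k"
      by (simp add: neg_sqrt_fps_def shift odd_dfact_eq_pred field_simps del: of_nat_Suc)
  qed
  have "fps_nth (1 + fps_const 2 * fps_X) 0 = (1 :: real)"
    by simp
  then have "1 + fps_const 2 * fps_X \<noteq> (0 :: real fps)"
    by force
  from fps_mult_eq_const_if_deriv_mult[OF inv_sqrt neg_sqrt this]
  have "inv_sqrt_fps * neg_sqrt_fps = fps_const (- 1)"
    by (simp add: inv_sqrt_fps_def neg_sqrt_fps_def odd_dfact_def)
  then show ?thesis
    by (metis fps_const_1_eq_1 fps_const_neg)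
qed

lemma b_seq_fps: "Abs_fps (\<lambda>n. 4 * b_seq n) = inv_sqrt_fps oo (fps_exp (-1) - 1)"
proof (rule fps_ext)
  fix n
  show "fps_nth (Abs_fps (\<lambda>n. 4 * b_seq n)) n = fps_nth (inv_sqrt_fps oo (fps_exp (-1) - 1)) n"
    unfolding inv_sqrt_fps_def fps_compose_exp_minus_one_nth by (simp add: b_seq_def mult_ac)
qed

lemma d_seq_fps: "Abs_fps d_seq = neg_sqrt_fps oo (fps_exp (-1) - 1)"
proof (rule fps_ext)
  fix n
  show "fps_nth (Abs_fps d_seq) n = fps_nth (neg_sqrt_fps oo (fps_exp (-1) - 1)) n"
    unfolding neg_sqrt_fps_def fps_compose_exp_minus_one_nth by (simp add: d_seq_def mult_ac)
qed

lemma b_seq_fps_mult_d_seq_fps: "Abs_fps (\<lambda>n. 4 * b_seq n) * Abs_fps d_seq = -1"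
  unfolding b_seq_fps d_seq_fps
  by (simp add: inv_sqrt_fps_mult_neg_sqrt_fps fps_compose_uminus flip: fps_compose_mult_distrib)

lemma d_seq_fps_reciprocal: "Abs_fps d_seq * Abs_fps (\<lambda>n. - 4 * b_seq n) = 1"
proof -
  have "Abs_fps (\<lambda>n. - 4 * b_seq n) = - Abs_fps (\<lambda>n. 4 * b_seq n)"
    by (rule fps_ext) simp
  then show ?thesis
    using b_seq_fps_mult_d_seq_fps by (simp add: mult.commute)
qed

lemma b_seq_fps_reciprocal: "Abs_fps b_seq * Abs_fps (\<lambda>n. - 4 * d_seq n) = 1"
proof -
  have "Abs_fps b_seq * Abs_fps (\<lambda>n. - 4 * d_seq n) = - (Abs_fps (\<lambda>n. 4 * b_seq n) * Abs_fps d_seq)"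
    unfolding fps_eq_iff fps_mult_nth fps_neg_nth fps_nth_Abs_fps
    by (simp add: sum_negf[symmetric] algebra_simps)
  then show ?thesis
    by (simp add: b_seq_fps_mult_d_seq_fps)
qed

lemma b_seq_0: "b_seq 0 = 1 / 4"
  by (simp add: b_seq_def odd_dfact_def)

lemma d_seq_0: "d_seq 0 = - 1"
  by (simp add: d_seq_def odd_dfact_def)

lemma D_mat_eq_hessenberg_mat: "D_mat n = hessenberg_mat n d_seq (\<lambda>i. d_seq (Suc i))"
  unfolding D_mat_def hessenberg_mat_def by (rule eq_matI) (auto simp: d_seq_0 Suc_diff_le)

lemma B_mat_eq_hessenberg_mat: "B_mat n = hessenberg_mat n b_seq (\<lambda>i. b_seq (Suc i))"
  unfolding B_mat_def hessenberg_mat_def by (rule eq_matI) (auto simp: Suc_diff_le)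

theorem theorem6p5:
  fixes n :: nat
  assumes "n \<ge> 1"
  shows "b_seq n = 1/4 * det (D_mat n)
       \<and> d_seq n = (-1) ^ (n - 1) * 4 ^ n * det (B_mat n)"
proof
  have "det (D_mat n) = 4 * b_seq n"
    using det_toeplitz_hessenberg_mat[OF d_seq_fps_reciprocal, of n]
    by (simp add: D_mat_eq_hessenberg_mat d_seq_0)
  then show "b_seq n = 1/4 * det (D_mat n)"
    by simp
  have "det (B_mat n) = - ((- 1 / 4) ^ n) * d_seq n"
    using det_toeplitz_hessenberg_mat[OF b_seq_fps_reciprocal, of n]
    by (simp add: B_mat_eq_hessenberg_mat b_seq_0)
  moreover have "(-1) ^ (n - 1) * 4 ^ n * (- ((- 1 / 4) ^ n)) = (1 :: real)"
    using assms by (cases n) (simp_all add: power_mult_distrib[symmetric])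
  ultimately show "d_seq n = (-1) ^ (n - 1) * 4 ^ n * det (B_mat n)"
    by (metis mult.assoc mult_1)
qed

end
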